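(* For generic values of the parameters $u,v\in\mathbb{C}$ (outside a proper analytic subset of parameter space), each of the six matrices $h^{cl}_l,\ h^{cl}_r,\ h^{q}_l,\ h^{q}_r,\ M^{cl}(v),\ M^{q}(v)$ has exactly two distinct eigenvalues. For each of these matrices, the Jordan canonical form consists of exactly two Jordan blocks, each of size $N$. The two eigenvalues are the two distinct diagonal values of the matrix: - $0$ and $1$ for the four matrices $h$; - $-\mathrm{i}\coth(u-v)$ and $\mathrm{i}\tanh(v)$ for $M^{cl}(v)$; - $-\mathrm{i}\tanh(u-v)$ and $\mathrm{i}\coth(v)$ for $M^{q}(v)$.
   Context: All matrices are $2N\times 2N$ complex matrices, indexed by $1,\dots,2N$. Entries not listed are zero, and only index pairs lying in $\{1,\dots,2N\}^2$ are meant. Here $\mathrm{i}$ is the imaginary unit, $s=1/\cosh(u)$, $\lambda_{cl}(v)=\tanh(v)\coth(u-v)$ and $\lambda_q(v)=\tanh(u-v)\coth(v)$. In all formulas $1\le i\le N$, $1\le j\le 2N$ and $k\ge 1$. The matrix $M^{cl}(v)$ is lower triangular, with entries - $M^{cl}_{2i-1,2i-1}=-\mathrm{i}\coth(u-v)$ and $M^{cl}_{2i,2i}=\mathrm{i}\tanh(v)$; - $M^{cl}_{2i-1+2k,\,2i-1}=-\mathrm{i}\,\lambda_{cl}^{k-1}/(\coth(v)\sinh^2(u-v))$; - $M^{cl}_{2i+2k,\,2i}=-\mathrm{i}\,\lambda_{cl}^{k-1}/(\tanh(u-v)\cosh^2(v))$; - $M^{cl}_{j+2k-1,\,j}=-\mathrm{i}\,\lambda_{cl}^{k-1}/(\cosh(v)\sinh(u-v))$.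 The matrix $M^{q}(v)$ is upper triangular, with entries - $M^{q}_{2i-1,2i-1}=-\mathrm{i}\tanh(u-v)$ and $M^{q}_{2i,2i}=\mathrm{i}\coth(v)$; - $M^{q}_{2i-1,\,2i-1+2k}=\mathrm{i}\,\lambda_q^{k-1}/(\tanh(v)\cosh^2(u-v))$; - $M^{q}_{2i,\,2i+2k}=\mathrm{i}\,\lambda_q^{k-1}/(\coth(u-v)\sinh^2(v))$; - $M^{q}_{j,\,j+2k-1}=\mathrm{i}\,\lambda_q^{k-1}/(\sinh(v)\cosh(u-v))$. The local matrices have entries (with $1\le j\le 2N-1$ wherever $j$ appears): - $h^{cl}_l$: $(h^{cl}_l)_{2i,2i}=1$ for $1\le i\le N$; $(h^{cl}_l)_{j+1,j}=-s$; $(h^{cl}_l)_{2i+1,2i-1}=1$ for $1\le i\le N-1$. - $h^{q}_l$: $(h^{q}_l)_{2i,2i}=1$; $(h^{q}_l)_{j,j+1}=s$; $(h^{q}_l)_{2i-1,2i+1}=1$ for $1\le i\le N-1$. - $h^{cl}_r$: $(h^{cl}_r)_{2i-1,2i-1}=1$; $(h^{cl}_r)_{j+1,j}=s$; $(h^{cl}_r)_{2i+2,2i}=1$ for $1\le i\le N-1$. - $h^{q}_r$: $(h^{q}_r)_{2i-1,2i-1}=1$; $(h^{q}_r)_{j,j+1}=-s$; $(h^{q}_r)_{2i,2i+2}=1$ for $1\le i\le N-1$. *)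

theory Defs
  imports "HOL-Analysis.Complex_Analysis_Basics" "Jordan_Normal_Form.Jordan_Normal_Form"
begin

text \<open>All matrices below are 2N x 2N; entries are given with the paper's 1-based
  indices a, b in {1..2N}; the Isabelle matrix (0-based) entry (r,c) is the paper's entry
  (r+1, c+1).\<close>

definition coth :: "complex \<Rightarrow> complex" where
  "coth x = cosh x / sinh x"

definition s_par :: "complex \<Rightarrow> complex" where
  "s_par u = 1 / cosh u"

definition lam_cl :: "complex \<Rightarrow> complex \<Rightarrow> complex" where
  "lam_cl u v = tanh v * coth (u - v)"

definition lam_q :: "complex \<Rightarrow> complex \<Rightarrow> complex" where
  "lam_q u v = tanh (u - v) * coth v"

definition mat1 :: "nat \<Rightarrow> (nat \<Rightarrow> nat \<Rightarrow> complex) \<Rightarrow> complex mat" where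
  "mat1 N f = mat (2*N) (2*N) (\<lambda>(r,c). f (r+1) (c+1))"

definition Mcl_entry :: "complex \<Rightarrow> complex \<Rightarrow> nat \<Rightarrow> nat \<Rightarrow> complex" where
  "Mcl_entry u v a b =
    (if a = b then (if odd a then - \<i> * coth (u - v) else \<i> * tanh v)
     else if b < a \<and> even (a - b) then
       (let k = (a - b) div 2 in
         if odd b then - \<i> * lam_cl u v ^ (k - 1) / (coth v * sinh (u - v) ^ 2)
         else - \<i> * lam_cl u v ^ (k - 1) / (tanh (u - v) * cosh v ^ 2))
     else if b < a \<and> odd (a - b) then
       (let k = (a - b + 1) div 2 in
         - \<i> * lam_cl u v ^ (k - 1) / (cosh v * sinh (u - v)))
     else 0)"

definition Mcl :: "nat \<Rightarrow> complex \<Rightarrow> complex \<Rightarrow> complex mat" where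
  "Mcl N u v = mat1 N (Mcl_entry u v)"

definition Mq_entry :: "complex \<Rightarrow> complex \<Rightarrow> nat \<Rightarrow> nat \<Rightarrow> complex" where
  "Mq_entry u v a b =
    (if a = b then (if odd a then - \<i> * tanh (u - v) else \<i> * coth v)
     else if a < b \<and> even (b - a) then
       (let k = (b - a) div 2 in
         if odd a then \<i> * lam_q u v ^ (k - 1) / (tanh v * cosh (u - v) ^ 2)
         else \<i> * lam_q u v ^ (k - 1) / (coth (u - v) * sinh v ^ 2))
     else if a < b \<and> odd (b - a) then
       (let k = (b - a + 1) div 2 in
         \<i> * lam_q u v ^ (k - 1) / (sinh v * cosh (u - v)))
     else 0)"

definition Mq :: "nat \<Rightarrow> complex \<Rightarrow> complex \<Rightarrow> complex mat" where
  "Mq N u v = mat1 N (Mq_entry u v)"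

definition hcl_l :: "nat \<Rightarrow> complex \<Rightarrow> complex mat" where
  "hcl_l N u = mat1 N (\<lambda>a b.
     if a = b \<and> even a then 1
     else if a = b + 1 then - s_par u
     else if a = b + 2 \<and> odd b then 1 else 0)"

definition hq_l :: "nat \<Rightarrow> complex \<Rightarrow> complex mat" where
  "hq_l N u = mat1 N (\<lambda>a b.
     if a = b \<and> even a then 1
     else if b = a + 1 then s_par u
     else if b = a + 2 \<and> odd a then 1 else 0)"

definition hcl_r :: "nat \<Rightarrow> complex \<Rightarrow> complex mat" where
  "hcl_r N u = mat1 N (\<lambda>a b.
     if a = b \<and> odd a then 1
     else if a = b + 1 then s_par u
     else if a = b + 2 \<and> even b then 1 else 0)"

definition hq_r :: "nat \<Rightarrow> complex \<Rightarrow> complex mat" where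
  "hq_r N u = mat1 N (\<lambda>a b.
     if a = b \<and> odd a then 1
     else if b = a + 1 then - s_par u
     else if b = a + 2 \<and> even a then 1 else 0)"

definition two_blocks :: "nat \<Rightarrow> complex mat \<Rightarrow> complex \<Rightarrow> complex \<Rightarrow> bool" where
  "two_blocks N A d1 d2 \<longleftrightarrow>
     d1 \<noteq> d2 \<and> {e. eigenvalue A e} = {d1, d2} \<and> jordan_nf A [(N, d1), (N, d2)]"

end

theory Submission
  imports Defs "HOL-Analysis.Complex_Transcendental"
    "Jordan_Normal_Form.Jordan_Normal_Form_Uniqueness" "Jordan_Normal_Form.Jordan_Normal_Form_Existence"
begin

text \<open>Grouping the coordinates in consecutive pairs, each of the six matrices is block triangular
  Toeplitz with \<open>2 \<times> 2\<close> blocks: the diagonal block is triangular with diagonal entries \<open>a \<noteq> d\<close>,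
  and the \<open>k\<close>-th block off the diagonal is \<open>l\<^sup>k\<^sup>-\<^sup>1 B\<close>. So the characteristic polynomial is
  \<open>(x - a)\<^sup>N (x - d)\<^sup>N\<close>, and the Jordan form has one block of size \<open>N\<close> for each eigenvalue as soon
  as both eigenvalues have geometric multiplicity one. To see the latter, solve the kernel equations
  pair by pair: once the preceding pairs vanish, the next pair solves a \<open>2 \<times> 2\<close> system whose
  determinant is built from the diagonal block and \<open>B\<close>; if it is nonzero, a kernel vector with one
  vanishing coordinate is zero. Reversing the order of the basis turns the upper triangular matrices
  into lower triangular ones. For \<open>M\<^sup>c\<^sup>l\<close> and \<open>M\<^sup>q\<close> these determinants are nonzero multiples of
  \<open>sinh u\<close> and the difference of the eigenvalues is a multiple of \<open>cosh u\<close>; for the matrices \<open>h\<close>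
  they are \<open>s\<^sup>2\<close> and \<open>1 - s\<^sup>2\<close>. Hence everything holds off the zero set of
  \<open>sinh u cosh u sinh v cosh v sinh (u - v) cosh (u - v)\<close>.\<close>

section \<open>Jordan forms with one block per eigenvalue\<close>

lemma kernel_dim_le_1I:
  fixes C :: "'a :: field mat"
  assumes C: "C \<in> carrier_mat n n" and p: "p < n"
    and determined: "\<And>v. v \<in> carrier_vec n \<Longrightarrow> C *\<^sub>v v = 0\<^sub>v n \<Longrightarrow> v $ p = 0 \<Longrightarrow> v = 0\<^sub>v n"
  shows "kernel_dim C \<le> 1"
proof (rule ccontr)
  interpret K: kernel n n C by unfold_locales (rule C)
  obtain B where fin: "finite B" and basis: "K.basis B" using kernel_basis_exists[OF C] by auto
  have B: "B \<subseteq> mat_kernel C" and indep: "K.lin_indpt B"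
    using basis unfolding K.Ker.basis_def by auto
  assume "\<not> kernel_dim C \<le> 1"
  hence "\<not> card B \<le> Suc 0" using K.Ker.dim_basis[OF fin basis] by simp
  then obtain b1 b2 where b: "b1 \<in> B" "b2 \<in> B" "b1 \<noteq> b2"
    using card_le_Suc0_iff_eq[OF fin] by blast
  have b_ker: "b \<in> carrier_vec n" "C *\<^sub>v b = 0\<^sub>v n" if "b \<in> B" for b
    using B that mat_kernelD[OF C] by auto
  show False
  proof (cases "b1 $ p = 0")
    case True
    hence "b1 = 0\<^sub>v n" using determined b_ker[OF b(1)] by simp
    moreover have "(UNIV :: 'a set) \<noteq> {0}" using zero_neq_one by (metis UNIV_I singletonD)
    hence "0\<^sub>v n \<notin> B" using K.Ker.zero_nin_lin_indpt[OF _ indep] B by simp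
    ultimately show False using b(1) by simp
  next
    case False
    define a where "a = (\<lambda>x. if x = b1 then b2 $ p else - (b1 $ p))"
    define w where "w = (b2 $ p) \<cdot>\<^sub>v b1 + (- (b1 $ p)) \<cdot>\<^sub>v b2"
    have w: "w \<in> carrier_vec n" "C *\<^sub>v w = 0\<^sub>v n"
      using b_ker[OF b(1)] b_ker[OF b(2)] C
      by (auto simp: w_def mult_add_distrib_mat_vec mult_mat_vec)
    have "w $ p = 0" using b_ker[OF b(1)] b_ker[OF b(2)] p by (simp add: w_def)
    hence w0: "w = 0\<^sub>v n" using determined w by blast
    have sub: "{b1, b2} \<subseteq> mat_kernel C" using b B by auto
    have "K.lincomb a {b1, b2} = 0\<^sub>v n"
    proof (rule eq_vecI)
      fix i assume "i < dim_vec (0\<^sub>v n :: 'a vec)"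
      hence i: "i < n" by simp
      have "K.lincomb a {b1, b2} $ i = w $ i"
        using K.lincomb_index[OF i sub] b(3) b_ker[OF b(1)] b_ker[OF b(2)] i
        by (simp add: a_def w_def)
      thus "K.lincomb a {b1, b2} $ i = 0\<^sub>v n $ i" using w0 by simp
    next
      have "K.lincomb a {b1, b2} \<in> mat_kernel C" by (rule K.Ker.lincomb_closed) (use sub in auto)
      thus "dim_vec (K.lincomb a {b1, b2}) = dim_vec (0\<^sub>v n :: 'a vec)"
        using mat_kernel[OF C] by auto
    qed
    hence "K.lin_dep B"
      by (intro K.Ker.lin_dep_crit[of "{b1, b2}" B a b2]) (use b False in \<open>auto simp: a_def\<close>)
    with indep show False by simp
  qed
qed

lemma similar_mat_four_block_swap:
  fixes X Y :: "'a :: comm_ring_1 mat"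
  assumes X: "X \<in> carrier_mat n n" and Y: "Y \<in> carrier_mat n n"
  shows "similar_mat (four_block_mat X (0\<^sub>m n n) (0\<^sub>m n n) Y) (four_block_mat Y (0\<^sub>m n n) (0\<^sub>m n n) X)"
proof -
  define P :: "'a mat" where "P = four_block_mat (0\<^sub>m n n) (1\<^sub>m n) (1\<^sub>m n) (0\<^sub>m n n)"
  have P: "P \<in> carrier_mat (n + n) (n + n)" "P * P = 1\<^sub>m (n + n)"
    unfolding P_def by (auto, subst mult_four_block_mat, auto intro!: eq_matI)
  have "P * four_block_mat Y (0\<^sub>m n n) (0\<^sub>m n n) X = four_block_mat (0\<^sub>m n n) X Y (0\<^sub>m n n)"
    unfolding P_def using X Y by (subst mult_four_block_mat) auto
  hence "P * four_block_mat Y (0\<^sub>m n n) (0\<^sub>m n n) X * P = four_block_mat (0\<^sub>m n n) X Y (0\<^sub>m n n) * P"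
    by simp
  also have "\<dots> = four_block_mat X (0\<^sub>m n n) (0\<^sub>m n n) Y"
    unfolding P_def using X Y by (subst mult_four_block_mat) auto
  finally have "P * four_block_mat Y (0\<^sub>m n n) (0\<^sub>m n n) X * P = four_block_mat X (0\<^sub>m n n) (0\<^sub>m n n) Y" .
  hence "similar_mat_wit (four_block_mat X (0\<^sub>m n n) (0\<^sub>m n n) Y) (four_block_mat Y (0\<^sub>m n n) (0\<^sub>m n n) X) P P"
    unfolding similar_mat_wit_def Let_def using X Y P by auto
  thus ?thesis unfolding similar_mat_def by blast
qed

lemma jordan_nf_swap_two_blocks:
  fixes A :: "'a :: comm_ring_1 mat"
  assumes "jordan_nf A [(n, a), (n, b)]"
  shows "jordan_nf A [(n, b), (n, a)]"
proof -
  have two_blocks: "jordan_matrix [(n, a), (n, b)] =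
      four_block_mat (jordan_block n a) (0\<^sub>m n n) (0\<^sub>m n n) (jordan_block n b)" for a b :: 'a
    by (simp add: jordan_matrix_Cons, rule eq_matI, auto simp: jordan_matrix_def)
  have "similar_mat (jordan_matrix [(n, a), (n, b)]) (jordan_matrix [(n, b), (n, a)])"
    unfolding two_blocks by (rule similar_mat_four_block_swap) auto
  with assms show ?thesis unfolding jordan_nf_def using similar_mat_trans by auto
qed

lemma jordan_nf_blocks_of_non_eigenvalue:
  assumes jnf: "jordan_nf A n_as" and "Polynomial.order e (char_poly A) = 0"
  shows "filter (\<lambda>na. snd na = e) n_as = []"
proof -
  have "sum_list (map fst (filter (\<lambda>na. snd na = e) n_as)) = 0"
    using jordan_nf_order[OF jnf, of e] assms(2) by simp
  moreover have "0 \<notin> fst ` set n_as" using jnf unfolding jordan_nf_def by simp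
  ultimately show ?thesis by (force simp: filter_empty_conv sum_list_eq_0_iff)
qed

text \<open>The number of Jordan blocks for \<open>e\<close> is the geometric multiplicity of \<open>e\<close>, their total size
  the algebraic one.\<close>
lemma jordan_nf_blocks_of_simple_eigenvalue:
  assumes jnf: "jordan_nf A n_as" and A: "A \<in> carrier_mat n n"
    and geo: "kernel_dim (char_matrix A e) \<le> 1" and alg: "Polynomial.order e (char_poly A) = k" "k \<noteq> 0"
  shows "filter (\<lambda>na. snd na = e) n_as = [(k, e)]"
proof -
  let ?blocks = "filter (\<lambda>na. snd na = e) n_as"
  have pos: "0 \<notin> fst ` set ?blocks" using jnf unfolding jordan_nf_def by auto
  have "length ?blocks = sum_list (map (min 1) (map fst ?blocks))"
    using pos by (induction n_as) auto
  also have "\<dots> = dim_gen_eigenspace A e 1"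
    unfolding dim_gen_eigenspace[OF jnf] by (metis (no_types, lifting) case_prod_beta filter_cong)
  also have "\<dots> = kernel_dim (char_matrix A e)"
    unfolding dim_gen_eigenspace_def using A by simp
  finally have "length ?blocks \<le> 1" using geo by simp
  moreover have size: "sum_list (map fst ?blocks) = k" using jordan_nf_order[OF jnf, of e] alg by simp
  ultimately obtain na where na: "?blocks = [na]"
    using alg(2) by (cases ?blocks) auto
  moreover have "snd na = e" using arg_cong[OF na, of set] by auto
  ultimately show ?thesis using size by (cases na) auto
qed

lemma two_blocksI:
  fixes A :: "complex mat"
  assumes A: "A \<in> carrier_mat (2 * N) (2 * N)" and N: "N \<noteq> 0" and d: "d1 \<noteq> d2"
    and char_poly: "char_poly A = [:- d1, 1:] ^ N * [:- d2, 1:] ^ N"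
    and geo1: "kernel_dim (char_matrix A d1) \<le> 1" and geo2: "kernel_dim (char_matrix A d2) \<le> 1"
  shows "two_blocks N A d1 d2"
proof -
  have "[:- d1, 1:] ^ N * [:- d2, 1:] ^ N \<noteq> 0" by auto
  hence alg: "Polynomial.order e (char_poly A) = (if e = d1 then N else 0) + (if e = d2 then N else 0)" for e
    unfolding char_poly by (simp add: order_mult order_linear_power)
  have eigenvalues: "{e. eigenvalue A e} = {d1, d2}"
    unfolding eigenvalue_root_char_poly[OF A] char_poly using N by (auto simp: poly_power)
  obtain as where "char_poly A = (\<Prod>a \<leftarrow> as. [:- a, 1:])"
    using char_poly_factorized[OF A] by auto
  then obtain n_as where jnf: "jordan_nf A n_as" using jordan_nf_exists[OF A] by blast
  let ?blocks = "\<lambda>e. filter (\<lambda>na. snd na = e) n_as"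
  have blocks1: "?blocks d1 = [(N, d1)]" and blocks2: "?blocks d2 = [(N, d2)]"
    using jordan_nf_blocks_of_simple_eigenvalue[OF jnf A] geo1 geo2 alg N d by auto
  have only_d1_d2: "snd na = d1 \<or> snd na = d2" if "na \<in> set n_as" for na
  proof (rule ccontr)
    assume "\<not> ?thesis"
    hence "?blocks (snd na) = []" using jordan_nf_blocks_of_non_eigenvalue[OF jnf] alg by auto
    with that show False by (auto simp: filter_empty_conv)
  qed
  have "filter (\<lambda>na. \<not> snd na = d1) n_as = ?blocks d2"
    by (rule filter_cong[OF refl]) (use only_d1_d2 d in auto)
  hence "length n_as = 2"
    using sum_length_filter_compl[of "\<lambda>na. snd na = d1" n_as] blocks1 blocks2 by simp
  then obtain x y where "n_as = [x, y]"
    by (metis One_nat_def Suc_1 length_0_conv length_Suc_conv)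
  hence "n_as = [(N, d1), (N, d2)] \<or> n_as = [(N, d2), (N, d1)]"
    using blocks1 blocks2 d by (auto split: if_splits)
  hence "jordan_nf A [(N, d1), (N, d2)]" using jnf jordan_nf_swap_two_blocks by auto
  thus ?thesis unfolding two_blocks_def using d eigenvalues by simp
qed

lemma two_blocks_commute: "two_blocks N A d1 d2 \<Longrightarrow> two_blocks N A d2 d1"
  unfolding two_blocks_def using jordan_nf_swap_two_blocks[of A N d1 d2] by (auto simp: insert_commute)

lemma two_blocks_similar:
  fixes A B :: "complex mat"
  assumes sim: "similar_mat A B" and A: "two_blocks N A d1 d2"
  shows "two_blocks N B d1 d2"
proof -
  obtain n where "A \<in> carrier_mat n n" "B \<in> carrier_mat n n" using similar_matD[OF sim] by auto
  hence "eigenvalue A e \<longleftrightarrow> eigenvalue B e" for e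
    by (simp add: eigenvalue_root_char_poly char_poly_similar[OF sim])
  thus ?thesis
    using A similar_mat_trans[OF similar_mat_sym[OF sim]] unfolding two_blocks_def jordan_nf_def by auto
qed

section \<open>Reversing the basis\<close>

definition exchange_mat :: "nat \<Rightarrow> 'a :: zero_neq_one mat" where
  "exchange_mat n = mat n n (\<lambda>(i, j). if i + j + 1 = n then 1 else 0)"

lemma exchange_mat_mult:
  fixes A :: "'a :: semiring_1 mat"
  assumes A: "A \<in> carrier_mat n nc"
  shows "exchange_mat n * A = mat n nc (\<lambda>(i, j). A $$ (n - 1 - i, j))"
proof (rule eq_matI)
  fix i j assume "i < dim_row (mat n nc (\<lambda>(i, j). A $$ (n - 1 - i, j)))"
    and "j < dim_col (mat n nc (\<lambda>(i, j). A $$ (n - 1 - i, j)))"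
  hence i: "i < n" and j: "j < nc" by auto
  have "(exchange_mat n * A) $$ (i, j) = (\<Sum>k \<in> {0..<n}. (if i + k + 1 = n then 1 else 0) * A $$ (k, j))"
    using A i j by (simp add: exchange_mat_def scalar_prod_def)
  also have "\<dots> = (\<Sum>k \<in> {0..<n}. if k = n - 1 - i then A $$ (k, j) else 0)"
    using i by (intro sum.cong) auto
  also have "\<dots> = A $$ (n - 1 - i, j)" using i by simp
  finally show "(exchange_mat n * A) $$ (i, j) = mat n nc (\<lambda>(i, j). A $$ (n - 1 - i, j)) $$ (i, j)"
    using i j by simp
qed (use A in \<open>auto simp: exchange_mat_def\<close>)

lemma exchange_mat_mult_exchange_mat: "exchange_mat n * exchange_mat n = (1\<^sub>m n :: 'a :: semiring_1 mat)"
  by (subst exchange_mat_mult) (auto simp: exchange_mat_def intro!: eq_matI)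

lemma mult_exchange_mat:
  fixes A :: "'a :: semiring_1 mat"
  assumes A: "A \<in> carrier_mat nr n"
  shows "A * exchange_mat n = mat nr n (\<lambda>(i, j). A $$ (i, n - 1 - j))"
proof (rule eq_matI)
  fix i j assume "i < dim_row (mat nr n (\<lambda>(i, j). A $$ (i, n - 1 - j)))"
    and "j < dim_col (mat nr n (\<lambda>(i, j). A $$ (i, n - 1 - j)))"
  hence i: "i < nr" and j: "j < n" by auto
  have "(A * exchange_mat n) $$ (i, j) = (\<Sum>k \<in> {0..<n}. A $$ (i, k) * (if k + j + 1 = n then 1 else 0))"
    using A i j by (simp add: exchange_mat_def scalar_prod_def)
  also have "\<dots> = (\<Sum>k \<in> {0..<n}. if k = n - 1 - j then A $$ (i, k) else 0)"
    using j by (intro sum.cong) auto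
  also have "\<dots> = A $$ (i, n - 1 - j)" using j by simp
  finally show "(A * exchange_mat n) $$ (i, j) = mat nr n (\<lambda>(i, j). A $$ (i, n - 1 - j)) $$ (i, j)"
    using i j by simp
qed (use A in \<open>auto simp: exchange_mat_def\<close>)

lemma similar_mat_reverse:
  fixes A :: "'a :: semiring_1 mat"
  assumes A: "A \<in> carrier_mat n n"
  shows "similar_mat A (mat n n (\<lambda>(i, j). A $$ (n - 1 - i, n - 1 - j)))"
proof -
  let ?R = "exchange_mat n :: 'a mat"
  have R: "?R \<in> carrier_mat n n" by (simp add: exchange_mat_def)
  have conj: "?R * A * ?R = mat n n (\<lambda>(i, j). A $$ (n - 1 - i, n - 1 - j))"
    by (subst exchange_mat_mult[OF A], subst mult_exchange_mat[of _ n]) auto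
  have "?R * (?R * A) = ?R * ?R * A" using A R by (simp add: assoc_mult_mat)
  hence "A = ?R * (?R * A * ?R) * ?R"
    using A R by (simp add: assoc_mult_mat[of _ n n _ n _ n] exchange_mat_mult_exchange_mat)
  hence "similar_mat_wit A (?R * A * ?R) ?R ?R"
    using A R exchange_mat_mult_exchange_mat[where 'a = 'a] by (auto simp: similar_mat_wit_def)
  thus ?thesis unfolding conj similar_mat_def by blast
qed

section \<open>Block triangular Toeplitz matrices with \<open>2 \<times> 2\<close> blocks\<close>

definition mat2x2 :: "'a \<Rightarrow> 'a \<Rightarrow> 'a \<Rightarrow> 'a \<Rightarrow> nat \<Rightarrow> nat \<Rightarrow> 'a" where
  "mat2x2 a b c d r k = (if r = 0 then if k = 0 then a else b else if k = 0 then c else d)"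

lemma mat2x2_simps [simp]:
  "mat2x2 a b c d 0 0 = a" "mat2x2 a b c d 0 (Suc 0) = b"
  "mat2x2 a b c d (Suc 0) 0 = c" "mat2x2 a b c d (Suc 0) (Suc 0) = d"
  by (simp_all add: mat2x2_def)

definition block_lower_toeplitz ::
  "nat \<Rightarrow> (nat \<Rightarrow> nat \<Rightarrow> 'a) \<Rightarrow> (nat \<Rightarrow> nat \<Rightarrow> 'a) \<Rightarrow> 'a \<Rightarrow> 'a :: comm_semiring_1 mat" where
  "block_lower_toeplitz N E B l = mat (2 * N) (2 * N) (\<lambda>(i, j).
     if i div 2 = j div 2 then E (i mod 2) (j mod 2)
     else if j div 2 < i div 2 then l ^ (i div 2 - j div 2 - 1) * B (i mod 2) (j mod 2) else 0)"

definition block_upper_toeplitz ::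
  "nat \<Rightarrow> (nat \<Rightarrow> nat \<Rightarrow> 'a) \<Rightarrow> (nat \<Rightarrow> nat \<Rightarrow> 'a) \<Rightarrow> 'a \<Rightarrow> 'a :: comm_semiring_1 mat" where
  "block_upper_toeplitz N E B l = mat (2 * N) (2 * N) (\<lambda>(i, j).
     if i div 2 = j div 2 then E (i mod 2) (j mod 2)
     else if i div 2 < j div 2 then l ^ (j div 2 - i div 2 - 1) * B (i mod 2) (j mod 2) else 0)"

lemma block_lower_toeplitz_dims [simp]:
  "dim_row (block_lower_toeplitz N E B l) = 2 * N" "dim_col (block_lower_toeplitz N E B l) = 2 * N"
  by (simp_all add: block_lower_toeplitz_def)

lemma block_lower_toeplitz_carrier [simp]: "block_lower_toeplitz N E B l \<in> carrier_mat (2 * N) (2 * N)"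
  by (simp add: carrier_matI)

lemma block_upper_toeplitz_carrier [simp]: "block_upper_toeplitz N E B l \<in> carrier_mat (2 * N) (2 * N)"
  by (simp add: block_upper_toeplitz_def)

lemma block_lower_toeplitz_index:
  assumes "I < N" "J < N" "r < 2" "c < 2"
  shows "block_lower_toeplitz N E B l $$ (2 * I + r, 2 * J + c) =
    (if I = J then E r c else if J < I then l ^ (I - J - 1) * B r c else 0)"
  using assms by (simp add: block_lower_toeplitz_def)

lemma block_upper_toeplitz_index:
  assumes "I < N" "J < N" "r < 2" "c < 2"
  shows "block_upper_toeplitz N E B l $$ (2 * I + r, 2 * J + c) =
    (if I = J then E r c else if I < J then l ^ (J - I - 1) * B r c else 0)"
  using assms by (simp add: block_upper_toeplitz_def)

lemma homogeneous_2x2_eq_zero: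
  fixes a b c d x y :: "'a :: field"
  assumes "a * x + b * y = 0" "c * x + d * y = 0" "a * d - b * c \<noteq> 0"
  shows "x = 0 \<and> y = 0"
proof -
  have "(a * d - b * c) * x = d * (a * x + b * y) - b * (c * x + d * y)"
    by (simp add: algebra_simps)
  moreover have "(a * d - b * c) * y = a * (c * x + d * y) - c * (a * x + b * y)"
    by (simp add: algebra_simps)
  ultimately show ?thesis using assms by simp
qed

lemma sum_lessThan_double: "(\<Sum>i < 2 * N. g i) = (\<Sum>J < N. g (2 * J) + g (2 * J + 1))"
  for N :: nat
  by (induction N) (auto simp: add.assoc)

lemma block_lower_toeplitz_mult_vec_nth:
  assumes v: "v \<in> carrier_vec (2 * N)" and I: "I < N" and r: "r < 2"
  shows "(block_lower_toeplitz N E B l *\<^sub>v v) $ (2 * I + r) =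
    E r 0 * v $ (2 * I) + E r 1 * v $ (2 * I + 1) +
    (\<Sum>J < I. l ^ (I - J - 1) * (B r 0 * v $ (2 * J) + B r 1 * v $ (2 * J + 1)))"
proof -
  let ?term = "\<lambda>J. l ^ (I - J - 1) * (B r 0 * v $ (2 * J) + B r 1 * v $ (2 * J + 1))"
  have div_mod: "(2 * J + c) div 2 = J" "(2 * J + c) mod 2 = c" if "c < 2" for J c :: nat
    using that by auto
  have [simp]: "Suc (J * 2) mod 2 = 1" for J :: nat by presburger
  have "(block_lower_toeplitz N E B l *\<^sub>v v) $ (2 * I + r) =
      (\<Sum>j < 2 * N. block_lower_toeplitz N E B l $$ (2 * I + r, j) * v $ j)"
    using v I r by (auto simp: block_lower_toeplitz_def scalar_prod_def lessThan_atLeast0)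
  also have "\<dots> = (\<Sum>J < N. (if J = I then E r 0 * v $ (2 * I) + E r 1 * v $ (2 * I + 1) else 0) +
      (if J < I then ?term J else 0))"
    unfolding sum_lessThan_double using I r
    by (intro sum.cong) (auto simp: block_lower_toeplitz_def div_mod algebra_simps)
  also have "\<dots> = (\<Sum>J < N. if J = I then E r 0 * v $ (2 * I) + E r 1 * v $ (2 * I + 1) else 0) +
      (\<Sum>J < N. if J < I then ?term J else 0)"
    by (rule sum.distrib)
  also have "(\<Sum>J < N. if J < I then ?term J else 0) = (\<Sum>J < I. ?term J)"
    using I by (intro sum.mono_neutral_cong_right) auto
  finally show ?thesis using I by simp
qed

lemma block_lower_toeplitz_kernel_rows:
  fixes E B :: "nat \<Rightarrow> nat \<Rightarrow> 'a :: field" and v :: "'a vec"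
  assumes v: "v \<in> carrier_vec (2 * N)"
    and ker: "char_matrix (block_lower_toeplitz N E B l) m *\<^sub>v v = 0\<^sub>v (2 * N)"
    and r: "r < 2" and prefix: "\<forall>J < I. v $ (2 * J) = 0 \<and> v $ (2 * J + 1) = 0"
  shows "I < N \<Longrightarrow> E r 0 * v $ (2 * I) + E r 1 * v $ (2 * I + 1) = m * v $ (2 * I + r)"
    and "Suc I < N \<Longrightarrow> B r 0 * v $ (2 * I) + B r 1 * v $ (2 * I + 1) +
      E r 0 * v $ (2 * Suc I) + E r 1 * v $ (2 * Suc I + 1) = m * v $ (2 * Suc I + r)"
proof -
  let ?A = "block_lower_toeplitz N E B l"
  have row: "(?A *\<^sub>v v) $ (2 * K + r) = m * v $ (2 * K + r)" if "K < N" for K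
  proof -
    have "char_matrix ?A m *\<^sub>v v = ?A *\<^sub>v v + ((- m) \<cdot>\<^sub>m 1\<^sub>m (2 * N)) *\<^sub>v v"
      unfolding char_matrix_def
      by (simp, rule add_mult_distrib_mat_vec[of _ "2 * N" "2 * N"]) (use v in auto)
    hence "(char_matrix ?A m *\<^sub>v v) $ (2 * K + r) = (?A *\<^sub>v v) $ (2 * K + r) - m * v $ (2 * K + r)"
      using v that r by simp
    thus ?thesis using ker that r by simp
  qed
  show "I < N \<Longrightarrow> E r 0 * v $ (2 * I) + E r 1 * v $ (2 * I + 1) = m * v $ (2 * I + r)"
    using row[of I] block_lower_toeplitz_mult_vec_nth[OF v _ r, of I E B l] prefix by simp
  show "Suc I < N \<Longrightarrow> B r 0 * v $ (2 * I) + B r 1 * v $ (2 * I + 1) +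
      E r 0 * v $ (2 * Suc I) + E r 1 * v $ (2 * Suc I + 1) = m * v $ (2 * Suc I + r)"
    using row[of "Suc I"] block_lower_toeplitz_mult_vec_nth[OF v _ r, of "Suc I" E B l] prefix
    by simp
qed

lemma zero_vec_by_pairsI:
  fixes v :: "'a :: zero vec"
  assumes v: "v \<in> carrier_vec (2 * N)"
    and pairs: "\<And>J. J < N \<Longrightarrow> v $ (2 * J) = 0 \<and> v $ (2 * J + 1) = 0"
  shows "v = 0\<^sub>v (2 * N)"
proof (rule eq_vecI)
  fix i assume "i < dim_vec (0\<^sub>v (2 * N) :: 'a vec)"
  hence i: "i < 2 * N" by simp
  have "i = 2 * (i div 2) \<or> i = 2 * (i div 2) + 1" by presburger
  thus "v $ i = 0\<^sub>v (2 * N) $ i" using pairs[of "i div 2"] i by auto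
qed (use v in simp)

lemma kernel_dim_block_lower_toeplitz_fst:
  fixes E B :: "nat \<Rightarrow> nat \<Rightarrow> 'a :: field"
  assumes E01: "E 0 1 = 0" and N: "N \<noteq> 0" and d: "E 1 1 - E 0 0 \<noteq> 0"
    and det: "E 1 0 * B 0 1 - (E 1 1 - E 0 0) * B 0 0 \<noteq> 0"
  shows "kernel_dim (char_matrix (block_lower_toeplitz N E B l) (E 0 0)) \<le> 1"
proof (rule kernel_dim_le_1I[where p = "2 * (N - 1)"])
  fix v :: "'a vec"
  assume v: "v \<in> carrier_vec (2 * N)"
    and ker: "char_matrix (block_lower_toeplitz N E B l) (E 0 0) *\<^sub>v v = 0\<^sub>v (2 * N)"
    and last: "v $ (2 * (N - 1)) = 0"
  note rows = block_lower_toeplitz_kernel_rows[OF v ker]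
  have "v $ (2 * I) = 0 \<and> v $ (2 * I + 1) = 0" if "I < N" for I
    using that
  proof (induction I rule: less_induct)
    case (less I)
    hence prefix: "\<forall>J < I. v $ (2 * J) = 0 \<and> v $ (2 * J + 1) = 0" by auto
    have row1: "E 1 0 * v $ (2 * I) + (E 1 1 - E 0 0) * v $ (2 * I + 1) = 0"
      using rows(1)[of 1 I] prefix less.prems by (simp add: algebra_simps)
    show ?case
    proof (cases "Suc I < N")
      case True
      have "B 0 0 * v $ (2 * I) + B 0 1 * v $ (2 * I + 1) = 0"
        using rows(2)[of 0 I] prefix True E01 by simp
      with row1 show ?thesis
        by (rule homogeneous_2x2_eq_zero) (use det in \<open>simp add: algebra_simps\<close>)
    next
      case False
      hence "I = N - 1" using less.prems by simp
      with last row1 d show ?thesis by simp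
    qed
  qed
  thus "v = 0\<^sub>v (2 * N)" by (rule zero_vec_by_pairsI[OF v])
qed (use N in auto)

lemma kernel_dim_block_lower_toeplitz_snd:
  fixes E B :: "nat \<Rightarrow> nat \<Rightarrow> 'a :: field"
  assumes E01: "E 0 1 = 0" and N: "N \<noteq> 0" and d: "E 0 0 - E 1 1 \<noteq> 0"
    and det: "(E 0 0 - E 1 1) * B 1 1 - E 1 0 * B 0 1 \<noteq> 0"
  shows "kernel_dim (char_matrix (block_lower_toeplitz N E B l) (E 1 1)) \<le> 1"
proof (rule kernel_dim_le_1I[where p = "2 * (N - 1) + 1"])
  fix v :: "'a vec"
  assume v: "v \<in> carrier_vec (2 * N)"
    and ker: "char_matrix (block_lower_toeplitz N E B l) (E 1 1) *\<^sub>v v = 0\<^sub>v (2 * N)"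
    and last: "v $ (2 * (N - 1) + 1) = 0"
  note rows = block_lower_toeplitz_kernel_rows[OF v ker]
  have "v $ (2 * I) = 0 \<and> v $ (2 * I + 1) = 0" if "I < N" for I
    using that
  proof (induction I rule: less_induct)
    case (less I)
    hence prefix: "\<forall>J < I. v $ (2 * J) = 0 \<and> v $ (2 * J + 1) = 0" by auto
    have x: "v $ (2 * I) = 0"
      using rows(1)[of 0 I] prefix less.prems E01 d by (simp add: algebra_simps)
    show ?case
    proof (cases "Suc I < N")
      case True
      \<comment> \<open>the first row of the next block couples \<open>v$(2I+1)\<close> with \<open>v$(2I+2)\<close>\<close>
      have "(E 0 0 - E 1 1) * v $ (2 * Suc I) + B 0 1 * v $ (2 * I + 1) = 0"
        using rows(2)[of 0 I] prefix True E01 x by (simp add: algebra_simps)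
      moreover have "E 1 0 * v $ (2 * Suc I) + B 1 1 * v $ (2 * I + 1) = 0"
        using rows(2)[of 1 I] prefix True x by (simp add: algebra_simps)
      ultimately have "v $ (2 * Suc I) = 0 \<and> v $ (2 * I + 1) = 0"
        by (rule homogeneous_2x2_eq_zero) (use det in \<open>simp add: algebra_simps\<close>)
      with x show ?thesis by simp
    next
      case False
      hence "I = N - 1" using less.prems by simp
      with last x show ?thesis by simp
    qed
  qed
  thus "v = 0\<^sub>v (2 * N)" by (rule zero_vec_by_pairsI[OF v])
qed (use N in auto)

lemma prod_list_map_mod_2:
  "prod_list (map (\<lambda>i. f (i mod 2)) [0..<2 * N]) = (f 0 :: 'a :: comm_monoid_mult) ^ N * f 1 ^ N"
proof (induction N)
  case (Suc N)
  have "[0..<2 * Suc N] = [0..<2 * N] @ [2 * N, Suc (2 * N)]" by (simp add: upt_Suc)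
  moreover have "Suc (2 * N) mod 2 = 1" by presburger
  ultimately show ?case using Suc by (simp add: algebra_simps)
qed simp

lemma char_poly_block_lower_toeplitz:
  fixes E B :: "nat \<Rightarrow> nat \<Rightarrow> 'a :: field"
  assumes E01: "E 0 1 = 0"
  shows "char_poly (block_lower_toeplitz N E B l) = [:- E 0 0, 1:] ^ N * [:- E 1 1, 1:] ^ N"
proof -
  let ?A = "block_lower_toeplitz N E B l"
  have "upper_triangular (transpose_mat ?A)"
    unfolding upper_triangular_def
  proof (intro allI impI)
    fix i j assume "i < dim_row (transpose_mat ?A)" and "j < i"
    moreover have "j div 2 \<le> i div 2" using \<open>j < i\<close> by (simp add: div_le_mono)
    moreover have "i div 2 = j div 2 \<Longrightarrow> j mod 2 = 0 \<and> i mod 2 = 1" using \<open>j < i\<close> by presburger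
    ultimately show "transpose_mat ?A $$ (i, j) = 0" using E01 by (auto simp: block_lower_toeplitz_def)
  qed
  hence "char_poly ?A = (\<Prod>a \<leftarrow> diag_mat (transpose_mat ?A). [:- a, 1:])"
    using char_poly_upper_triangular[of "transpose_mat ?A" "2 * N"]
      char_poly_transpose_mat[OF block_lower_toeplitz_carrier[of N E B l]] by simp
  also have "diag_mat (transpose_mat ?A) = map (\<lambda>i. E (i mod 2) (i mod 2)) [0..<2 * N]"
    by (auto simp: diag_mat_def block_lower_toeplitz_def)
  finally show ?thesis by (simp add: o_def prod_list_map_mod_2[of "\<lambda>k. [:- E k k, 1:]"])
qed

lemma two_blocks_block_lower_toeplitz:
  fixes a c d a' b' c' d' l :: complex
  assumes N: "N \<noteq> 0" and d: "a \<noteq> d"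
    and det1: "c * b' - (d - a) * a' \<noteq> 0" and det2: "(a - d) * d' - c * b' \<noteq> 0"
  shows "two_blocks N (block_lower_toeplitz N (mat2x2 a 0 c d) (mat2x2 a' b' c' d') l) a d"
    (is "two_blocks N ?A a d")
proof (rule two_blocksI)
  show "char_poly ?A = [:- a, 1:] ^ N * [:- d, 1:] ^ N"
    using char_poly_block_lower_toeplitz[of "mat2x2 a 0 c d" N "mat2x2 a' b' c' d'" l] by simp
  show "kernel_dim (char_matrix ?A a) \<le> 1"
    using kernel_dim_block_lower_toeplitz_fst[of "mat2x2 a 0 c d" N "mat2x2 a' b' c' d'" l] assms
    by simp
  show "kernel_dim (char_matrix ?A d) \<le> 1"
    using kernel_dim_block_lower_toeplitz_snd[of "mat2x2 a 0 c d" N "mat2x2 a' b' c' d'" l] assms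
    by simp
qed (use assms in auto)

lemma block_upper_toeplitz_reverse:
  "block_upper_toeplitz N (mat2x2 a b c d) (mat2x2 a' b' c' d') l = mat (2 * N) (2 * N) (\<lambda>(i, j).
     block_lower_toeplitz N (mat2x2 d c b a) (mat2x2 d' c' b' a') l $$ (2 * N - 1 - i, 2 * N - 1 - j))"
  (is "?U = mat _ _ ?R")
proof (rule eq_matI)
  fix i j assume "i < dim_row (mat (2 * N) (2 * N) ?R)" "j < dim_col (mat (2 * N) (2 * N) ?R)"
  hence "i < 2 * N" "j < 2 * N" by auto
  then obtain I r J k where ij: "i = 2 * I + r" "j = 2 * J + k" and IJ: "I < N" "J < N" "r < 2" "k < 2"
    by (metis div_mult_mod_eq mod_less_divisor less_mult_imp_div_less mult.commute zero_less_numeral)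
  have rev: "2 * N - 1 - i = 2 * (N - 1 - I) + (1 - r)" "2 * N - 1 - j = 2 * (N - 1 - J) + (1 - k)"
    using ij IJ by linarith+
  have rot: "mat2x2 x4 x3 x2 x1 (1 - r) (1 - k) = mat2x2 x1 x2 x3 x4 r k" for x1 x2 x3 x4 :: 'a
    using IJ by (auto simp: mat2x2_def less_2_cases_iff)
  have block_order: "N - 1 - I = N - 1 - J \<longleftrightarrow> I = J" "N - 1 - J < N - 1 - I \<longleftrightarrow> I < J"
    "(N - 1 - I) - (N - 1 - J) - 1 = J - I - 1"
    using IJ by linarith+
  let ?L = "block_lower_toeplitz N (mat2x2 d c b a) (mat2x2 d' c' b' a') l"
  have "mat (2 * N) (2 * N) ?R $$ (i, j) = ?L $$ (2 * (N - 1 - I) + (1 - r), 2 * (N - 1 - J) + (1 - k))"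
    unfolding rev[symmetric] using \<open>i < 2 * N\<close> \<open>j < 2 * N\<close> by simp
  also have "\<dots> = (if N - 1 - I = N - 1 - J then mat2x2 d c b a (1 - r) (1 - k)
      else if N - 1 - J < N - 1 - I
      then l ^ ((N - 1 - I) - (N - 1 - J) - 1) * mat2x2 d' c' b' a' (1 - r) (1 - k) else 0)"
    by (rule block_lower_toeplitz_index) (use IJ in auto)
  also have "\<dots> = ?U $$ (i, j)"
    unfolding ij block_upper_toeplitz_index[OF IJ] block_order rot ..
  finally show "?U $$ (i, j) = mat (2 * N) (2 * N) ?R $$ (i, j)" ..
qed (simp_all add: block_upper_toeplitz_def)

lemma two_blocks_block_upper_toeplitz:
  fixes a b d a' b' c' d' l :: complex
  assumes N: "N \<noteq> 0" and d: "a \<noteq> d"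
    and det1: "(d - a) * a' - b * c' \<noteq> 0" and det2: "(a - d) * d' - b * c' \<noteq> 0"
  shows "two_blocks N (block_upper_toeplitz N (mat2x2 a b 0 d) (mat2x2 a' b' c' d') l) a d"
proof -
  have "b * c' - (a - d) * d' \<noteq> 0" using det2 by (simp add: right_minus_eq)
  hence "two_blocks N (block_lower_toeplitz N (mat2x2 d 0 b a) (mat2x2 d' c' b' a') l) d a"
    using N d det1 by (intro two_blocks_block_lower_toeplitz) auto
  hence "two_blocks N (block_upper_toeplitz N (mat2x2 a b 0 d) (mat2x2 a' b' c' d') l) d a"
    unfolding block_upper_toeplitz_reverse
    by (rule two_blocks_similar[OF similar_mat_reverse[OF block_lower_toeplitz_carrier]])
  thus ?thesis by (rule two_blocks_commute)
qed

section \<open>The six matrices\<close>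

lemma mat1_eqI:
  assumes entries: "\<And>I J r c. I < N \<Longrightarrow> J < N \<Longrightarrow> r < 2 \<Longrightarrow> c < 2 \<Longrightarrow>
      f (2 * I + r + 1) (2 * J + c + 1) = A $$ (2 * I + r, 2 * J + c)"
    and A: "A \<in> carrier_mat (2 * N) (2 * N)"
  shows "mat1 N f = A"
proof (rule eq_matI)
  fix i j assume "i < dim_row A" "j < dim_col A"
  hence "i < 2 * N" "j < 2 * N" using A by auto
  moreover from this have "i div 2 < N" "j div 2 < N" by auto
  ultimately show "mat1 N f $$ (i, j) = A $$ (i, j)"
    using entries[of "i div 2" "j div 2" "i mod 2" "j mod 2"] by (simp add: mat1_def)
qed (use A in \<open>auto simp: mat1_def\<close>)

lemma block_index_iff:
  fixes I J r c :: nat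
  assumes "r < 2" "c < 2"
  shows "2 * I + r + 1 = 2 * J + c + 1 \<longleftrightarrow> I = J \<and> r = c"
    and "2 * I + r + 1 = 2 * J + c + 1 + 1 \<longleftrightarrow> I = J \<and> r = 1 \<and> c = 0 \<or> I = Suc J \<and> r = 0 \<and> c = 1"
    and "2 * I + r + 1 = 2 * J + c + 1 + 2 \<longleftrightarrow> I = Suc J \<and> r = c"
    and "even (2 * I + r + 1) \<longleftrightarrow> r = 1"
  using assms by (auto simp: less_2_cases_iff) presburger+

lemma hcl_l_eq: "hcl_l N u = block_lower_toeplitz N (mat2x2 0 0 (- s_par u) 1) (mat2x2 1 (- s_par u) 0 0) 0"
  unfolding hcl_l_def
  by (rule mat1_eqI, simp only: block_index_iff)
    (auto simp: block_lower_toeplitz_index mat2x2_def less_2_cases_iff)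

lemma hcl_r_eq: "hcl_r N u = block_lower_toeplitz N (mat2x2 1 0 (s_par u) 0) (mat2x2 0 (s_par u) 0 1) 0"
  unfolding hcl_r_def
  by (rule mat1_eqI, simp only: block_index_iff)
    (auto simp: block_lower_toeplitz_index mat2x2_def less_2_cases_iff)

lemma hq_l_eq: "hq_l N u = block_upper_toeplitz N (mat2x2 0 (s_par u) 0 1) (mat2x2 1 0 (s_par u) 0) 0"
  unfolding hq_l_def
  by (rule mat1_eqI, simp only: block_index_iff)
    (auto simp: block_upper_toeplitz_index mat2x2_def less_2_cases_iff)

lemma hq_r_eq: "hq_r N u = block_upper_toeplitz N (mat2x2 1 (- s_par u) 0 0) (mat2x2 0 0 (- s_par u) 1) 0"
  unfolding hq_r_def
  by (rule mat1_eqI, simp only: block_index_iff)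
    (auto simp: block_upper_toeplitz_index mat2x2_def less_2_cases_iff)

lemma Mcl_eq: "Mcl N u v = block_lower_toeplitz N
    (mat2x2 (- \<i> * coth (u - v)) 0 (- \<i> / (cosh v * sinh (u - v))) (\<i> * tanh v))
    (mat2x2 (- \<i> / (coth v * sinh (u - v) ^ 2)) (- \<i> / (cosh v * sinh (u - v)))
            (- \<i> * lam_cl u v / (cosh v * sinh (u - v))) (- \<i> / (tanh (u - v) * cosh v ^ 2)))
    (lam_cl u v)" (is "_ = ?A")
  unfolding Mcl_def
proof (rule mat1_eqI)
  fix I J r c :: nat assume IJrc: "I < N" "J < N" "r < 2" "c < 2"
  consider "I = J" | d where "I = Suc (J + d)" | d where "J = Suc (I + d)"
    by (metis less_imp_Suc_add linorder_neqE_nat)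
  then show "Mcl_entry u v (2 * I + r + 1) (2 * J + c + 1) = ?A $$ (2 * I + r, 2 * J + c)"
    unfolding block_lower_toeplitz_index[OF IJrc]
    by cases (use IJrc in \<open>auto simp: Mcl_entry_def Let_def mat2x2_def less_2_cases_iff\<close>)
qed simp

lemma Mq_eq: "Mq N u v = block_upper_toeplitz N
    (mat2x2 (- \<i> * tanh (u - v)) (\<i> / (sinh v * cosh (u - v))) 0 (\<i> * coth v))
    (mat2x2 (\<i> / (tanh v * cosh (u - v) ^ 2)) (\<i> * lam_q u v / (sinh v * cosh (u - v)))
            (\<i> / (sinh v * cosh (u - v))) (\<i> / (coth (u - v) * sinh v ^ 2)))
    (lam_q u v)" (is "_ = ?A")
  unfolding Mq_def
proof (rule mat1_eqI)
  fix I J r c :: nat assume IJrc: "I < N" "J < N" "r < 2" "c < 2"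
  consider "I = J" | d where "I = Suc (J + d)" | d where "J = Suc (I + d)"
    by (metis less_imp_Suc_add linorder_neqE_nat)
  then show "Mq_entry u v (2 * I + r + 1) (2 * J + c + 1) = ?A $$ (2 * I + r, 2 * J + c)"
    unfolding block_upper_toeplitz_index[OF IJrc]
    by cases (use IJrc in \<open>auto simp: Mq_entry_def Let_def mat2x2_def less_2_cases_iff\<close>)
qed simp

lemma s_par_nonzero: "cosh u \<noteq> 0 \<Longrightarrow> s_par u \<noteq> 0"
  by (simp add: s_par_def)

lemma s_par_square_neq_1:
  assumes "sinh u \<noteq> 0"
  shows "s_par u * s_par u \<noteq> 1"
proof
  assume "s_par u * s_par u = 1"
  hence "cosh u ^ 2 = 1" unfolding s_par_def by (simp add: field_simps power2_eq_square)
  thus False using cosh_square_eq[of u] assms by simp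
qed

lemma two_blocks_h:
  assumes N: "N \<noteq> 0" and "sinh u \<noteq> 0" "cosh u \<noteq> 0"
  shows "two_blocks N (hcl_l N u) 0 1" "two_blocks N (hcl_r N u) 0 1"
    "two_blocks N (hq_l N u) 0 1" "two_blocks N (hq_r N u) 0 1"
proof -
  note s = s_par_nonzero[OF assms(3)] s_par_square_neq_1[OF assms(2)]
  show "two_blocks N (hcl_l N u) 0 1" unfolding hcl_l_eq
    by (rule two_blocks_block_lower_toeplitz) (use N s in auto)
  show "two_blocks N (hcl_r N u) 0 1" unfolding hcl_r_eq
    by (rule two_blocks_commute, rule two_blocks_block_lower_toeplitz) (use N s in auto)
  show "two_blocks N (hq_l N u) 0 1" unfolding hq_l_eq
    by (rule two_blocks_block_upper_toeplitz) (use N s in auto)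
  show "two_blocks N (hq_r N u) 0 1" unfolding hq_r_eq
    by (rule two_blocks_commute, rule two_blocks_block_upper_toeplitz) (use N s in auto)
qed

lemma Mcl_block_discriminants:
  fixes u v :: complex
  assumes nz: "sinh v \<noteq> 0" "cosh v \<noteq> 0" "sinh (u - v) \<noteq> 0" "cosh (u - v) \<noteq> 0"
  shows "- \<i> * coth (u - v) - \<i> * tanh v = - \<i> * cosh u / (cosh v * sinh (u - v))"
    and "(- \<i> / (cosh v * sinh (u - v))) * (- \<i> / (cosh v * sinh (u - v)))
       - (\<i> * tanh v - - \<i> * coth (u - v)) * (- \<i> / (coth v * sinh (u - v) ^ 2))
       = - sinh u / (cosh v * sinh (u - v) ^ 3)"
    and "(- \<i> * coth (u - v) - \<i> * tanh v) * (- \<i> / (tanh (u - v) * cosh v ^ 2))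
       - (- \<i> / (cosh v * sinh (u - v))) * (- \<i> / (cosh v * sinh (u - v)))
       = - sinh u / (cosh v ^ 3 * sinh (u - v))"
proof -
  define sv cv sw cw where "sv = sinh v" "cv = cosh v" "sw = sinh (u - v)" "cw = cosh (u - v)"
  have u: "sinh u = sw * cv + cw * sv" "cosh u = cw * cv + sw * sv"
    using sinh_add[of "u - v" v] cosh_add[of "u - v" v] unfolding sv_cv_sw_cw_def by simp_all
  have pyth: "1 + sv ^ 2 = cv ^ 2" "cw ^ 2 - 1 = sw ^ 2"
    unfolding sv_cv_sw_cw_def by (simp_all add: cosh_square_eq)
  have nz': "sv \<noteq> 0" "cv \<noteq> 0" "sw \<noteq> 0" "cw \<noteq> 0" using nz by (simp_all add: sv_cv_sw_cw_def)
  note defs = coth_def tanh_def sv_cv_sw_cw_def[symmetric]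
  show "- \<i> * coth (u - v) - \<i> * tanh v = - \<i> * cosh u / (cosh v * sinh (u - v))"
    unfolding defs u using nz' by (simp add: field_simps)
  have "(- \<i> / (cv * sw)) * (- \<i> / (cv * sw)) - (\<i> * (sv / cv) - - \<i> * (cw / sw)) * (- \<i> / (cv / sv * sw ^ 2))
      = - (1 + sv ^ 2) / (cv ^ 2 * sw ^ 2) - cw * sv / (cv * sw ^ 3)"
    using nz' by (simp add: field_simps power2_eq_square power3_eq_cube)
  also have "\<dots> = - (sw * cv + cw * sv) / (cv * sw ^ 3)"
    unfolding pyth using nz' by (simp add: field_simps power2_eq_square power3_eq_cube)
  finally show "(- \<i> / (cosh v * sinh (u - v))) * (- \<i> / (cosh v * sinh (u - v)))
       - (\<i> * tanh v - - \<i> * coth (u - v)) * (- \<i> / (coth v * sinh (u - v) ^ 2))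
       = - sinh u / (cosh v * sinh (u - v) ^ 3)"
    unfolding defs u .
  have "(- \<i> * (cw / sw) - \<i> * (sv / cv)) * (- \<i> / (sw / cw * cv ^ 2)) - (- \<i> / (cv * sw)) * (- \<i> / (cv * sw))
      = - (cw ^ 2 - 1) / (cv ^ 2 * sw ^ 2) - cw * sv / (cv ^ 3 * sw)"
    using nz' by (simp add: field_simps power2_eq_square power3_eq_cube)
  also have "\<dots> = - (sw * cv + cw * sv) / (cv ^ 3 * sw)"
    unfolding pyth using nz' by (simp add: field_simps power2_eq_square power3_eq_cube)
  finally show "(- \<i> * coth (u - v) - \<i> * tanh v) * (- \<i> / (tanh (u - v) * cosh v ^ 2))
       - (- \<i> / (cosh v * sinh (u - v))) * (- \<i> / (cosh v * sinh (u - v)))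
       = - sinh u / (cosh v ^ 3 * sinh (u - v))"
    unfolding defs u .
qed

lemma Mq_block_discriminants:
  fixes u v :: complex
  assumes nz: "sinh v \<noteq> 0" "cosh v \<noteq> 0" "sinh (u - v) \<noteq> 0" "cosh (u - v) \<noteq> 0"
  shows "- \<i> * tanh (u - v) - \<i> * coth v = - \<i> * cosh u / (sinh v * cosh (u - v))"
    and "(\<i> * coth v - - \<i> * tanh (u - v)) * (\<i> / (tanh v * cosh (u - v) ^ 2))
       - (\<i> / (sinh v * cosh (u - v))) * (\<i> / (sinh v * cosh (u - v)))
       = - sinh u / (sinh v * cosh (u - v) ^ 3)"
    and "(- \<i> * tanh (u - v) - \<i> * coth v) * (\<i> / (coth (u - v) * sinh v ^ 2))
       - (\<i> / (sinh v * cosh (u - v))) * (\<i> / (sinh v * cosh (u - v)))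
       = sinh u / (sinh v ^ 3 * cosh (u - v))"
proof -
  define sv cv sw cw where "sv = sinh v" "cv = cosh v" "sw = sinh (u - v)" "cw = cosh (u - v)"
  have u: "sinh u = sw * cv + cw * sv" "cosh u = cw * cv + sw * sv"
    using sinh_add[of "u - v" v] cosh_add[of "u - v" v] unfolding sv_cv_sw_cw_def by simp_all
  have pyth: "cv ^ 2 - 1 = sv ^ 2" "sw ^ 2 + 1 = cw ^ 2"
    unfolding sv_cv_sw_cw_def by (simp_all add: cosh_square_eq)
  have nz': "sv \<noteq> 0" "cv \<noteq> 0" "sw \<noteq> 0" "cw \<noteq> 0" using nz by (simp_all add: sv_cv_sw_cw_def)
  note defs = coth_def tanh_def sv_cv_sw_cw_def[symmetric]
  show "- \<i> * tanh (u - v) - \<i> * coth v = - \<i> * cosh u / (sinh v * cosh (u - v))"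
    unfolding defs u using nz' by (simp add: field_simps)
  have "(\<i> * (cv / sv) - - \<i> * (sw / cw)) * (\<i> / (sv / cv * cw ^ 2)) - (\<i> / (sv * cw)) * (\<i> / (sv * cw))
      = - (cv ^ 2 - 1) / (sv ^ 2 * cw ^ 2) - sw * cv / (sv * cw ^ 3)"
    using nz' by (simp add: field_simps power2_eq_square power3_eq_cube)
  also have "\<dots> = - (sw * cv + cw * sv) / (sv * cw ^ 3)"
    unfolding pyth using nz' by (simp add: field_simps power2_eq_square power3_eq_cube)
  finally show "(\<i> * coth v - - \<i> * tanh (u - v)) * (\<i> / (tanh v * cosh (u - v) ^ 2))
       - (\<i> / (sinh v * cosh (u - v))) * (\<i> / (sinh v * cosh (u - v)))
       = - sinh u / (sinh v * cosh (u - v) ^ 3)"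
    unfolding defs u .
  have "(- \<i> * (sw / cw) - \<i> * (cv / sv)) * (\<i> / (cw / sw * sv ^ 2)) - (\<i> / (sv * cw)) * (\<i> / (sv * cw))
      = (sw ^ 2 + 1) / (cw ^ 2 * sv ^ 2) + cv * sw / (cw * sv ^ 3)"
    using nz' by (simp add: field_simps power2_eq_square power3_eq_cube)
  also have "\<dots> = (sw * cv + cw * sv) / (sv ^ 3 * cw)"
    unfolding pyth using nz' by (simp add: field_simps power2_eq_square power3_eq_cube)
  finally show "(- \<i> * tanh (u - v) - \<i> * coth v) * (\<i> / (coth (u - v) * sinh v ^ 2))
       - (\<i> / (sinh v * cosh (u - v))) * (\<i> / (sinh v * cosh (u - v)))
       = sinh u / (sinh v ^ 3 * cosh (u - v))"
    unfolding defs u .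
qed

lemma two_blocks_Mcl:
  assumes "N \<noteq> 0" and nz: "sinh v \<noteq> 0" "cosh v \<noteq> 0" "sinh (u - v) \<noteq> 0" "cosh (u - v) \<noteq> 0"
    and "sinh u \<noteq> 0" "cosh u \<noteq> 0"
  shows "two_blocks N (Mcl N u v) (- \<i> * coth (u - v)) (\<i> * tanh v)"
  unfolding Mcl_eq
  by (rule two_blocks_block_lower_toeplitz) (use assms Mcl_block_discriminants[OF nz] in auto)

lemma two_blocks_Mq:
  assumes "N \<noteq> 0" and nz: "sinh v \<noteq> 0" "cosh v \<noteq> 0" "sinh (u - v) \<noteq> 0" "cosh (u - v) \<noteq> 0"
    and "sinh u \<noteq> 0" "cosh u \<noteq> 0"
  shows "two_blocks N (Mq N u v) (- \<i> * tanh (u - v)) (\<i> * coth v)"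
  unfolding Mq_eq
  by (rule two_blocks_block_upper_toeplitz) (use assms Mq_block_discriminants[OF nz] in auto)

lemma sinh_cosh_of_real_complex:
  "sinh (complex_of_real x) = complex_of_real (sinh x)" "cosh (complex_of_real x) = complex_of_real (cosh x)"
  by (simp_all add: sinh_field_def cosh_field_def exp_of_real[symmetric])

theorem mainTheorem2:
  fixes N :: nat
  assumes "N \<ge> 1"
  shows "\<exists>f :: complex \<Rightarrow> complex \<Rightarrow> complex.
           (\<forall>v. (\<lambda>u. f u v) holomorphic_on UNIV) \<and>
           (\<forall>u. (\<lambda>v. f u v) holomorphic_on UNIV) \<and>
           (\<exists>u v. f u v \<noteq> 0) \<and>
           (\<forall>u v. f u v \<noteq> 0 \<longrightarrow>
              two_blocks N (hcl_l N u) 0 1 \<and>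
              two_blocks N (hcl_r N u) 0 1 \<and>
              two_blocks N (hq_l N u) 0 1 \<and>
              two_blocks N (hq_r N u) 0 1 \<and>
              two_blocks N (Mcl N u v) (- \<i> * coth (u - v)) (\<i> * tanh v) \<and>
              two_blocks N (Mq N u v) (- \<i> * tanh (u - v)) (\<i> * coth v))"
proof (intro exI conjI allI impI)
  define f :: "complex \<Rightarrow> complex \<Rightarrow> complex" where
    "f u v = sinh u * cosh u * sinh v * cosh v * sinh (u - v) * cosh (u - v)" for u v
  show "(\<lambda>u. f u v) holomorphic_on UNIV" "(\<lambda>v. f u v) holomorphic_on UNIV" for u v
    unfolding f_def by (intro analytic_imp_holomorphic analytic_intros)+
  show "f 2 1 \<noteq> 0"
    using sinh_cosh_of_real_complex[of 2] sinh_cosh_of_real_complex[of 1] by (simp add: f_def)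
  fix u v assume "f u v \<noteq> 0"
  hence nz: "sinh v \<noteq> 0" "cosh v \<noteq> 0" "sinh (u - v) \<noteq> 0" "cosh (u - v) \<noteq> 0" "sinh u \<noteq> 0" "cosh u \<noteq> 0"
    by (auto simp: f_def)
  have N: "N \<noteq> 0" using assms by simp
  show "two_blocks N (hcl_l N u) 0 1" "two_blocks N (hcl_r N u) 0 1"
    "two_blocks N (hq_l N u) 0 1" "two_blocks N (hq_r N u) 0 1"
    using two_blocks_h[OF N nz(5,6)] by simp_all
  show "two_blocks N (Mcl N u v) (- \<i> * coth (u - v)) (\<i> * tanh v)"
    by (rule two_blocks_Mcl[OF N nz])
  show "two_blocks N (Mq N u v) (- \<i> * tanh (u - v)) (\<i> * coth v)"
    by (rule two_blocks_Mq[OF N nz])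
qed

end
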